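(* There are universal constants $C,C'$ such that for all $A<n$ (with $n$ an integer) and all $\Lambda$ with $A\pm\Lambda$ integers, $|\Lambda|\le A-1$, \[ \Pr\bigl[BINGO(A+\Lambda,A-\Lambda;n,n)\bigr]\le\frac{C}{\sqrt{n-A}}e^{-\Lambda^2/(n-A)}, \] and, if moreover $\Lambda\neq0$, this is at most $\frac{C'}{|\Lambda|}e^{-\Lambda^2/(2(n-A))}$.
   Context: Fix $\alpha>1$. Consider the Markov chain on $\mathbb N\times\mathbb N$ which from state $(i,j)$ moves to $(i+1,j)$ with probability $i^\alpha/(i^\alpha+j^\alpha)$ and to $(i,j+1)$ with probability $j^\alpha/(i^\alpha+j^\alpha)$. For states $(a,b)$, $(c,d)$, $BINGO(a,b;c,d)$ denotes the event that this chain, started at state $(a,b)$, visits the state $(c,d)$. *)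

theory Defs
  imports "HOL-Probability.Probability"
begin

definition urn_step :: "real \<Rightarrow> nat \<times> nat \<Rightarrow> (nat \<times> nat) pmf" where
  "urn_step \<alpha> s = (case s of (i, j) \<Rightarrow>
     map_pmf (\<lambda>b. if b then (i + 1, j) else (i, j + 1))
       (bernoulli_pmf (real i powr \<alpha> / (real i powr \<alpha> + real j powr \<alpha>))))"

fun urn_walk :: "real \<Rightarrow> nat \<Rightarrow> nat \<times> nat \<Rightarrow> (nat \<times> nat) list pmf" where
  "urn_walk \<alpha> 0 s = return_pmf [s]"
| "urn_walk \<alpha> (Suc N) s =
     bind_pmf (urn_step \<alpha> s) (\<lambda>t. map_pmf (\<lambda>xs. s # xs) (urn_walk \<alpha> N t))"

text \<open>Pr[BINGO(a,b;c,d)]: probability that the chain started at (a,b) ever visits (c,d),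
 i.e. the limit (supremum) over N of the probability of visiting (c,d) within the
 first N steps (continuity of measure along the increasing events).\<close>
definition bingo_prob :: "real \<Rightarrow> nat \<Rightarrow> nat \<Rightarrow> nat \<Rightarrow> nat \<Rightarrow> real" where
  "bingo_prob \<alpha> a b c d =
     (SUP N. measure_pmf.prob (urn_walk \<alpha> N (a, b)) {xs. (c, d) \<in> set xs})"

end

theory Submission
  imports Defs
begin

text \<open>Since the urn favours the coordinate that is ahead, it is driven away from the diagonal at
  least as strongly as the walk of a fair coin. The hitting probability of \<open>(n, n)\<close> for the fair
  walk, a binomial probability, is therefore a supersolution for the urn and bounds the BINGO
  probability. A local central limit estimate, obtained from the ratio of consecutive binomial
  coefficients and the bound \<open>C(2M, M) / 4^M \<le> 1 / sqrt (2M + 1)\<close>, turns this into the Gaussian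
  bound; the second bound follows from \<open>s \<le> exp (s\<^sup>2 / 2)\<close> with \<open>s = \<bar>\<Lambda>\<bar> / sqrt (n - A)\<close>.\<close>

section \<open>Exponential and binomial estimates\<close>

lemma exp_le_one_plus_quadratic:
  assumes "0 \<le> (y::real)"
  shows "exp (y - y\<^sup>2 / 2) \<le> 1 + y"
proof -
  let ?f = "\<lambda>t::real. ln (1 + t) - t + t\<^sup>2 / 2"
  have "?f 0 \<le> ?f y"
  proof (rule DERIV_nonneg_imp_nondecreasing[OF assms])
    fix t :: real assume "0 \<le> t" "t \<le> y"
    then show "\<exists>d. (?f has_real_derivative d) (at t) \<and> 0 \<le> d"
      by (intro exI[of _ "1 / (1 + t) - 1 + t"]) (auto intro!: derivative_eq_intros simp: field_simps)
  qed
  then have "y - y\<^sup>2 / 2 \<le> ln (1 + y)" by simp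
  with assms show ?thesis
    by (metis exp_le_cancel_iff exp_ln add_pos_nonneg zero_less_one)
qed

lemma one_minus_le_exp_quadratic:
  assumes "0 \<le> (x::real)" "x \<le> 1"
  shows "1 - x \<le> exp (- x - x\<^sup>2 / 2)"
proof (cases "x = 1")
  case False
  with assms have "x < 1" by simp
  let ?f = "\<lambda>t::real. - t - t\<^sup>2 / 2 - ln (1 - t)"
  have "?f 0 \<le> ?f x"
  proof (rule DERIV_nonneg_imp_nondecreasing[OF assms(1)])
    fix t :: real assume "0 \<le> t" "t \<le> x"
    with \<open>x < 1\<close> show "\<exists>d. (?f has_real_derivative d) (at t) \<and> 0 \<le> d"
      by (intro exI[of _ "- 1 - t + 1 / (1 - t)"]) (auto intro!: derivative_eq_intros simp: field_simps)
  qed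
  then have "ln (1 - x) \<le> - x - x\<^sup>2 / 2" by simp
  with \<open>x < 1\<close> show ?thesis by (metis diff_gt_0_iff_gt exp_le_cancel_iff exp_ln)
qed simp

lemma le_exp_half_square: "(s::real) \<le> exp (s\<^sup>2 / 2)"
proof -
  have "s \<le> 1 + s\<^sup>2 / 2"
    using zero_le_power2[of "s - 1"] by (simp add: power2_eq_square algebra_simps)
  also have "\<dots> \<le> exp (s\<^sup>2 / 2)" by (rule exp_ge_add_one_self)
  finally show ?thesis .
qed

lemma central_binomial_Suc:
  "Suc M * (2 * Suc M choose Suc M) = 2 * (2 * M + 1) * (2 * M choose M)"
proof -
  have "Suc M * (2 * Suc M choose Suc M) = 2 * (Suc M * (Suc (2 * M) choose M))"
    using Suc_times_binomial[of M "Suc (2 * M)"] by (simp del: binomial_Suc_Suc)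
  also have "Suc (2 * M) choose M = Suc (2 * M) choose Suc M"
    using binomial_symmetric[of "Suc M" "Suc (2 * M)"] by simp
  also have "Suc M * \<dots> = Suc (2 * M) * (2 * M choose M)"
    by (rule Suc_times_binomial)
  finally show ?thesis by simp
qed

lemma central_binomial_square_le: "(real (2 * M choose M) / 4 ^ M)\<^sup>2 * (2 * real M + 1) \<le> 1"
proof (induction M)
  case (Suc M)
  define s where "s = real (2 * M choose M) / 4 ^ M"
  define c where "c = real (2 * Suc M choose Suc M)"
  have "real (Suc M * (2 * Suc M choose Suc M)) = real (2 * (2 * M + 1) * (2 * M choose M))"
    by (simp only: central_binomial_Suc)
  then have rec: "real (Suc M) * c = 2 * (2 * real M + 1) * real (2 * M choose M)"
    unfolding c_def by (simp only: of_nat_mult of_nat_add of_nat_numeral of_nat_1)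
  have "c / 4 ^ Suc M = real (Suc M) * c / (real (Suc M) * 4 ^ Suc M)"
    by simp
  also have "\<dots> = 2 * (2 * real M + 1) * real (2 * M choose M) / ((real M + 1) * (4 * 4 ^ M))"
    unfolding rec by simp
  also have "\<dots> = s * (2 * real M + 1) / (2 * real M + 2)"
    unfolding s_def by (simp add: divide_simps) (simp add: algebra_simps)
  finally have step: "c / 4 ^ Suc M = s * (2 * real M + 1) / (2 * real M + 2)" .
  have "(2 * real M + 1) * (2 * real M + 3) \<le> (2 * real M + 2)\<^sup>2"
    by (simp add: power2_eq_square algebra_simps)
  then have ratio_le: "(2 * real M + 1) * (2 * real M + 3) / (2 * real M + 2)\<^sup>2 \<le> 1"
    by simp
  have "(s * (2 * real M + 1) / (2 * real M + 2))\<^sup>2 * (2 * real (Suc M) + 1)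
      = s\<^sup>2 * (2 * real M + 1) * ((2 * real M + 1) * (2 * real M + 3) / (2 * real M + 2)\<^sup>2)"
    by (simp add: field_simps power2_eq_square)
  also have "\<dots> \<le> s\<^sup>2 * (2 * real M + 1)"
    using mult_left_mono[OF ratio_le, of "s\<^sup>2 * (2 * real M + 1)"] by simp
  finally have "(s * (2 * real M + 1) / (2 * real M + 2))\<^sup>2 * (2 * real (Suc M) + 1)
      \<le> s\<^sup>2 * (2 * real M + 1)" .
  with Suc.IH show ?case unfolding c_def[symmetric] step s_def by linarith
qed simp

lemma central_binomial_le: "real (2 * M choose M) / 4 ^ M \<le> 1 / sqrt (2 * real M + 1)"
proof -
  have "(real (2 * M choose M) / 4 ^ M)\<^sup>2 \<le> 1 / (2 * real M + 1)"
    using central_binomial_square_le[of M] by (simp add: field_simps)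
  then have "sqrt ((real (2 * M choose M) / 4 ^ M)\<^sup>2) \<le> sqrt (1 / (2 * real M + 1))"
    by (rule real_sqrt_le_mono)
  then show ?thesis by (simp add: real_sqrt_divide)
qed

lemma central_binomial_offset_Suc:
  assumes "j < M"
  shows "real (M + j + 1) * real (2 * M choose (M - Suc j)) = real (M - j) * real (2 * M choose (M - j))"
proof -
  have "Suc (M + j) * (Suc (M - Suc j + (M + j)) choose (M - Suc j))
      = Suc (M - Suc j) * (Suc (M - Suc j + (M + j)) choose Suc (M - Suc j))"
    by (rule Suc_times_binomial_add[symmetric])
  moreover have "Suc (M - Suc j + (M + j)) = 2 * M" "Suc (M - Suc j) = M - j"
    using assms by auto
  ultimately show ?thesis by (metis Suc_eq_plus1 of_nat_mult)
qed

text \<open>The ratio of consecutive coefficients is \<open>(1 - x) / (1 + y)\<close> with \<open>y = x + 1 / M\<close>;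
  the second-order terms of the two exponential estimates telescope to the exact exponent.\<close>
lemma central_binomial_tail:
  assumes "1 \<le> M"
  shows "j \<le> M \<Longrightarrow> real (2 * M choose (M - j))
    \<le> real (2 * M choose M) * exp ((real j)\<^sup>2 / (2 * (real M)\<^sup>2) - (real j)\<^sup>2 / real M)"
proof (induction j)
  case (Suc j)
  then have "j < M" by simp
  define x where "x = real j / real M"
  define y where "y = real (Suc j) / real M"
  define E where "E k = (real k)\<^sup>2 / (2 * (real M)\<^sup>2) - (real k)\<^sup>2 / real M" for k :: nat
  have M_pos: "0 < real M" using assms by simp
  have x: "0 \<le> x" "x \<le> 1" and y: "0 \<le> y"
    using \<open>j < M\<close> by (auto simp: x_def y_def)
  have "1 - x = real (M - j) / real M" "1 + y = real (M + j + 1) / real M"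
    using \<open>j < M\<close> M_pos by (simp_all add: x_def y_def of_nat_diff diff_divide_distrib add_divide_distrib)
  then have "real (M - j) / real (M + j + 1) = (1 - x) / (1 + y)"
    using M_pos by simp
  moreover have "real (2 * M choose (M - Suc j))
      = real (M - j) / real (M + j + 1) * real (2 * M choose (M - j))"
    using central_binomial_offset_Suc[OF \<open>j < M\<close>] by (simp add: field_simps)
  ultimately have "real (2 * M choose (M - Suc j)) = (1 - x) / (1 + y) * real (2 * M choose (M - j))"
    by simp
  also have "\<dots> \<le> exp (- x - x\<^sup>2 / 2) / exp (y - y\<^sup>2 / 2) * (real (2 * M choose M) * exp (E j))"
  proof (rule mult_mono)
    show "(1 - x) / (1 + y) \<le> exp (- x - x\<^sup>2 / 2) / exp (y - y\<^sup>2 / 2)"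
      using one_minus_le_exp_quadratic[OF x] exp_le_one_plus_quadratic[OF y] x y
      by (intro frac_le) auto
    show "real (2 * M choose (M - j)) \<le> real (2 * M choose M) * exp (E j)"
      using Suc \<open>j < M\<close> by (simp add: E_def)
  qed (use x in auto)
  also have "\<dots> = real (2 * M choose M) * exp ((- x - x\<^sup>2 / 2) - (y - y\<^sup>2 / 2) + E j)"
    unfolding exp_add exp_diff by simp
  also have "(- x - x\<^sup>2 / 2) - (y - y\<^sup>2 / 2) + E j = E (Suc j)"
    using M_pos by (simp add: x_def y_def E_def field_simps power2_eq_square)
  finally show ?case by (simp add: E_def)
qed simp

lemma exp_two_le_nine: "exp (2::real) \<le> 9"
proof -
  have "exp (2::real) = exp 1 * exp 1" by (simp flip: exp_add)
  also have "\<dots> \<le> 3 * 3" using exp_le by (intro mult_mono) auto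
  finally show ?thesis by simp
qed

lemma gaussian_shift_half:
  fixes m d :: real
  assumes "1 \<le> m" "0 \<le> d" "d \<le> m"
  shows "exp (1/2) / sqrt m * exp (- d\<^sup>2 / m) \<le> 100 / sqrt (m + 1/2) * exp (- (d + 1/2)\<^sup>2 / (m + 1/2))"
proof -
  have "m * (d + 1/2)\<^sup>2 - d\<^sup>2 * (m + 1/2) = d * m + m / 4 - d\<^sup>2 / 2"
    by (simp add: power2_eq_square algebra_simps)
  also have "\<dots> \<le> m * (m + 1/2)"
  proof -
    have "d * m \<le> m * m" using assms by (simp add: mult_right_mono)
    moreover have "m * (m + 1/2) = m * m + m / 2" by (simp add: algebra_simps)
    ultimately show ?thesis using assms zero_le_power2[of d] by linarith
  qed
  finally have "m * (d + 1/2)\<^sup>2 - d\<^sup>2 * (m + 1/2) \<le> m * (m + 1/2)" .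
  then have "(d + 1/2)\<^sup>2 / (m + 1/2) \<le> d\<^sup>2 / m + 1"
    using assms by (simp add: field_simps)
  then have "exp (- d\<^sup>2 / m) \<le> exp 1 * exp (- (d + 1/2)\<^sup>2 / (m + 1/2))"
    by (simp flip: exp_add)
  then have "exp (1/2) * exp (- d\<^sup>2 / m) \<le> exp 2 * exp (- (d + 1/2)\<^sup>2 / (m + 1/2))"
    by (simp add: mult.assoc flip: exp_add)
  also have "\<dots> \<le> 9 * exp (- (d + 1/2)\<^sup>2 / (m + 1/2))"
    using exp_two_le_nine by simp
  finally have "exp (1/2) / sqrt m * exp (- d\<^sup>2 / m) \<le> 9 / sqrt m * exp (- (d + 1/2)\<^sup>2 / (m + 1/2))"
    using assms by (simp add: divide_right_mono)
  also have "\<dots> \<le> 18 / sqrt (m + 1/2) * exp (- (d + 1/2)\<^sup>2 / (m + 1/2))"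
  proof -
    have "sqrt (m + 1/2) \<le> sqrt (2\<^sup>2 * m)"
      using assms by (intro real_sqrt_le_mono) simp
    also have "\<dots> = 2 * sqrt m"
      by (simp add: real_sqrt_mult)
    finally have "sqrt (m + 1/2) \<le> 2 * sqrt m" .
    then have "9 / sqrt m \<le> 18 / sqrt (m + 1/2)"
      using assms by (simp add: field_simps)
    then show ?thesis by (rule mult_right_mono) simp
  qed
  also have "\<dots> \<le> 100 / sqrt (m + 1/2) * exp (- (d + 1/2)\<^sup>2 / (m + 1/2))"
    using assms by (intro mult_right_mono divide_right_mono) auto
  finally show ?thesis .
qed

section \<open>The fair walk\<close>

text \<open>The walk that moves each coordinate with probability \<open>1/2\<close> visits the point that is \<open>u\<close> and
  \<open>v\<close> steps ahead of it iff exactly \<open>u\<close> of its next \<open>u + v\<close> moves go in the first coordinate.\<close>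
definition fair_hit :: "nat \<Rightarrow> nat \<Rightarrow> real" where
  "fair_hit u v = real ((u + v) choose u) / 2 ^ (u + v)"

lemma fair_hit_nonneg [simp]: "0 \<le> fair_hit u v"
  by (simp add: fair_hit_def)

lemma fair_hit_commute: "fair_hit u v = fair_hit v u"
  unfolding fair_hit_def using binomial_symmetric[of u "u + v"] by (simp add: add.commute)

lemma fair_hit_0_Suc: "2 * fair_hit 0 (Suc v) = fair_hit 0 v"
  by (simp add: fair_hit_def)

lemma fair_hit_Suc_Suc: "2 * fair_hit (Suc u) (Suc v) = fair_hit u (Suc v) + fair_hit (Suc u) v"
proof -
  have "Suc u + Suc v = Suc (Suc (u + v))" "u + Suc v = Suc (u + v)" "Suc u + v = Suc (u + v)"
    by simp_all
  then show ?thesis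
    unfolding fair_hit_def by (simp only: binomial_Suc_Suc[of "Suc (u + v)" u]) (simp add: add_divide_distrib)
qed

lemma fair_hit_le_more_balanced:
  assumes "u < v"
  shows "fair_hit u (Suc v) \<le> fair_hit (Suc u) v"
proof -
  have "(Suc (u + v)) choose u \<le> (Suc (u + v)) choose Suc u"
    using assms by (intro binomial_mono) auto
  then show ?thesis by (simp add: fair_hit_def divide_right_mono)
qed

lemma fair_hit_Suc_le:
  assumes "u \<le> v"
  shows "fair_hit u (Suc v) \<le> fair_hit u v"
proof (cases u)
  case 0
  have "fair_hit 0 (Suc v) \<le> fair_hit 0 v"
    using fair_hit_0_Suc[of v] fair_hit_nonneg[of 0 "Suc v"] by linarith
  with 0 show ?thesis by simp
next
  case (Suc w)
  with assms have "fair_hit w (Suc v) \<le> fair_hit (Suc w) v"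
    by (intro fair_hit_le_more_balanced) simp
  with fair_hit_Suc_Suc[of w v] show ?thesis unfolding Suc by linarith
qed

lemma fair_hit_central_gaussian:
  assumes "1 \<le> M" "j \<le> M"
  shows "fair_hit (M - j) (M + j) \<le> exp (1/2) / sqrt M * exp (- (real j)\<^sup>2 / real M)"
proof -
  have M_pos: "0 < real M" using assms by simp
  have sum_eq: "M - j + (M + j) = 2 * M"
    using assms by simp
  have "fair_hit (M - j) (M + j) = real (2 * M choose (M - j)) / 4 ^ M"
    unfolding fair_hit_def sum_eq power_mult by simp
  also have "\<dots> \<le> real (2 * M choose M) / 4 ^ M
      * (exp ((real j)\<^sup>2 / (2 * (real M)\<^sup>2)) * exp (- (real j)\<^sup>2 / real M))"
    using central_binomial_tail[OF assms] by (simp add: divide_right_mono exp_diff exp_minus field_simps)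
  also have "\<dots> \<le> 1 / sqrt M * (exp (1/2) * exp (- (real j)\<^sup>2 / real M))"
  proof (rule mult_mono)
    have "1 / sqrt (2 * real M + 1) \<le> 1 / sqrt M"
      using M_pos by (intro divide_left_mono) auto
    then show "real (2 * M choose M) / 4 ^ M \<le> 1 / sqrt M"
      using central_binomial_le[of M] by linarith
    have "(real j)\<^sup>2 \<le> (real M)\<^sup>2"
      using assms by (simp add: power_mono)
    then have "(real j)\<^sup>2 / (2 * (real M)\<^sup>2) \<le> 1/2"
      using M_pos by (simp add: field_simps)
    then show "exp ((real j)\<^sup>2 / (2 * (real M)\<^sup>2)) * exp (- (real j)\<^sup>2 / real M)
        \<le> exp (1/2) * exp (- (real j)\<^sup>2 / real M)"
      by (intro mult_right_mono) auto
  qed auto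
  finally show ?thesis by simp
qed

lemma fair_hit_gaussian:
  assumes "u \<le> v" "1 \<le> u + v"
  shows "fair_hit u v \<le> 100 / sqrt ((real u + real v) / 2)
    * exp (- ((real v - real u) / 2)\<^sup>2 / ((real u + real v) / 2))"
proof (cases "even (u + v)")
  case True
  then obtain M where M: "u + v = 2 * M" by (rule evenE)
  define j where "j = M - u"
  have "1 \<le> M" "j \<le> M" and uv: "u = M - j" "v = M + j"
    using assms M by (auto simp: j_def)
  then have m: "(real u + real v) / 2 = real M" and d: "(real v - real u) / 2 = real j"
    by (auto simp: of_nat_diff)
  have "fair_hit u v \<le> exp (1/2) / sqrt M * exp (- (real j)\<^sup>2 / real M)"
    using fair_hit_central_gaussian[OF \<open>1 \<le> M\<close> \<open>j \<le> M\<close>] uv by simp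
  also have "\<dots> \<le> 100 / sqrt M * exp (- (real j)\<^sup>2 / real M)"
  proof -
    have "exp (1/2 :: real) \<le> exp 1" by simp
    with exp_le have "exp (1/2 :: real) \<le> 100" by linarith
    then show ?thesis by (intro mult_right_mono divide_right_mono) auto
  qed
  finally show ?thesis unfolding m d .
next
  case False
  then obtain M where M: "u + v = 2 * M + 1" by (rule oddE)
  define j where "j = M - u"
  have "j \<le> M" and uv: "u = M - j" "v = Suc (M + j)"
    using assms M by (auto simp: j_def)
  then have m: "(real u + real v) / 2 = real M + 1/2" and d: "(real v - real u) / 2 = real j + 1/2"
    by (auto simp: of_nat_diff)
  show ?thesis
  proof (cases "M = 0")
    case True
    then have "fair_hit u v = 1/2" using uv \<open>j \<le> M\<close> by (simp add: fair_hit_def)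
    also have "\<dots> \<le> 100 * exp (- 1/2)"
      using exp_ge_add_one_self[of "- 1/2"] by simp
    also have "\<dots> \<le> 100 / sqrt (1/2) * exp (- 1/2)"
      by (intro mult_right_mono) (auto simp: le_divide_eq)
    finally show ?thesis unfolding m d using True \<open>j \<le> M\<close> by (simp add: power2_eq_square)
  next
    case False
    have "fair_hit u v \<le> fair_hit (M - j) (M + j)"
      unfolding uv using \<open>j \<le> M\<close> by (intro fair_hit_Suc_le) simp
    also have "\<dots> \<le> exp (1/2) / sqrt M * exp (- (real j)\<^sup>2 / real M)"
      using False \<open>j \<le> M\<close> by (intro fair_hit_central_gaussian) auto
    also have "\<dots> \<le> 100 / sqrt (real M + 1/2) * exp (- (real j + 1/2)\<^sup>2 / (real M + 1/2))"
      using False \<open>j \<le> M\<close> by (intro gaussian_shift_half) auto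
    finally show ?thesis unfolding m d .
  qed
qed

definition fair_bingo :: "nat \<Rightarrow> nat \<Rightarrow> nat \<Rightarrow> real" where
  "fair_bingo n a b = (if a \<le> n \<and> b \<le> n then fair_hit (n - a) (n - b) else 0)"

lemma fair_bingo_commute: "fair_bingo n a b = fair_bingo n b a"
  by (auto simp: fair_bingo_def fair_hit_commute)

lemma fair_bingo_pascal:
  assumes "(a, b) \<noteq> (n, n)"
  shows "fair_bingo n (Suc a) b + fair_bingo n a (Suc b) \<le> 2 * fair_bingo n a b"
proof (cases "a \<le> n \<and> b \<le> n")
  case True
  consider "a = n" "b < n" | "a < n" "b = n" | "a < n" "b < n"
    using True assms by fastforce
  then show ?thesis
  proof cases
    case 1
    then show ?thesis
      using fair_hit_0_Suc[of "n - Suc b"] by (simp add: fair_bingo_def Suc_diff_Suc)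
  next
    case 2
    then show ?thesis
      using fair_hit_0_Suc[of "n - Suc a"]
      by (simp add: fair_bingo_def Suc_diff_Suc fair_hit_commute[of _ 0])
  next
    case 3
    then show ?thesis
      using fair_hit_Suc_Suc[of "n - Suc a" "n - Suc b"] by (simp add: fair_bingo_def Suc_diff_Suc)
  qed
qed (auto simp: fair_bingo_def)

lemma fair_bingo_le_more_balanced:
  assumes "a < b"
  shows "fair_bingo n a (Suc b) \<le> fair_bingo n (Suc a) b"
proof (cases "b < n")
  case True
  have "fair_hit (n - Suc b) (Suc (n - Suc a)) \<le> fair_hit (Suc (n - Suc b)) (n - Suc a)"
    using assms True by (intro fair_hit_le_more_balanced) simp
  with assms True show ?thesis
    by (simp add: fair_bingo_def Suc_diff_Suc fair_hit_commute[of "n - a"] fair_hit_commute[of "n - Suc a"])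
qed (simp add: fair_bingo_def)

text \<open>By Pascal's rule \<open>fair_bingo\<close> is at least the average of its two successors, and a
  leader-favouring urn puts the larger weight on the smaller one.\<close>
lemma fair_bingo_supersolution:
  assumes "(a, b) \<noteq> (n, n)" "0 \<le> q" "q \<le> 1"
    and "b < a \<Longrightarrow> 1/2 \<le> q" and "a < b \<Longrightarrow> q \<le> 1/2"
  shows "q * fair_bingo n (Suc a) b + (1 - q) * fair_bingo n a (Suc b) \<le> fair_bingo n a b"
proof -
  define X where "X = fair_bingo n (Suc a) b"
  define Y where "Y = fair_bingo n a (Suc b)"
  have leader_bias: "(q - 1/2) * (X - Y) \<le> 0"
  proof (cases a b rule: linorder_cases)
    case less
    then show ?thesis
      using assms(5) fair_bingo_le_more_balanced[OF less, of n]
      by (simp add: X_def Y_def mult_nonpos_nonneg)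
  next
    case equal
    then show ?thesis by (simp add: X_def Y_def fair_bingo_commute[of n "Suc b"])
  next
    case greater
    then show ?thesis
      using assms(4) fair_bingo_le_more_balanced[OF greater, of n]
      by (simp add: X_def Y_def fair_bingo_commute[of n a] fair_bingo_commute[of n "Suc a"]
          mult_nonneg_nonpos)
  qed
  have "q * X + (1 - q) * Y = (X + Y) / 2 + (q - 1/2) * (X - Y)"
    by (simp add: field_simps)
  also have "\<dots> \<le> (X + Y) / 2"
    using leader_bias by (simp only: add_le_same_cancel1)
  also have "\<dots> \<le> fair_bingo n a b"
    using fair_bingo_pascal[OF assms(1)] by (simp add: X_def Y_def)
  finally show ?thesis by (simp add: X_def Y_def)
qed

section \<open>Comparison of the urn with the fair walk\<close>

lemma powr_share_bounds:
  fixes x y \<alpha> :: real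
  shows "0 \<le> x powr \<alpha> / (x powr \<alpha> + y powr \<alpha>)" "x powr \<alpha> / (x powr \<alpha> + y powr \<alpha>) \<le> 1"
proof -
  have nonneg: "0 \<le> x powr \<alpha>" "0 \<le> y powr \<alpha>" by simp_all
  then show "0 \<le> x powr \<alpha> / (x powr \<alpha> + y powr \<alpha>)" by simp
  show "x powr \<alpha> / (x powr \<alpha> + y powr \<alpha>) \<le> 1"
  proof (cases "x powr \<alpha> + y powr \<alpha> = 0")
    case False
    with nonneg have "0 < x powr \<alpha> + y powr \<alpha>" by linarith
    with nonneg show ?thesis by (simp add: divide_le_eq_1_pos)
  qed simp
qed

lemma powr_share_half:
  fixes x y \<alpha> :: real
  assumes "0 < \<alpha>" "0 \<le> y" "y < x"
  shows "1/2 \<le> x powr \<alpha> / (x powr \<alpha> + y powr \<alpha>)" "y powr \<alpha> / (y powr \<alpha> + x powr \<alpha>) \<le> 1/2"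
proof -
  have less: "y powr \<alpha> < x powr \<alpha>" using assms by (intro powr_less_mono2) auto
  moreover have "0 \<le> y powr \<alpha>" by simp
  ultimately have pos: "0 < x powr \<alpha> + y powr \<alpha>" by linarith
  with less show "1/2 \<le> x powr \<alpha> / (x powr \<alpha> + y powr \<alpha>)"
    by (simp add: le_divide_eq)
  from pos less show "y powr \<alpha> / (y powr \<alpha> + x powr \<alpha>) \<le> 1/2"
    by (simp add: divide_le_eq add.commute)
qed

lemma prob_urn_walk_Suc:
  fixes n a b :: nat and \<alpha> :: real and E :: "(nat \<times> nat) list set"
  defines "E \<equiv> {xs. (n, n) \<in> set xs}"
    and "q \<equiv> real a powr \<alpha> / (real a powr \<alpha> + real b powr \<alpha>)"
  assumes "(a, b) \<noteq> (n, n)"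
  shows "measure_pmf.prob (urn_walk \<alpha> (Suc N) (a, b)) E
    = q * measure_pmf.prob (urn_walk \<alpha> N (Suc a, b)) E
      + (1 - q) * measure_pmf.prob (urn_walk \<alpha> N (a, Suc b)) E"
proof -
  have q: "0 \<le> q" "q \<le> 1" unfolding q_def by (rule powr_share_bounds)+
  have "(#) (a, b) -` E = E" using assms(3) by (auto simp: E_def)
  then have "emeasure (measure_pmf (urn_walk \<alpha> (Suc N) (a, b))) E
    = emeasure (measure_pmf (urn_walk \<alpha> N (Suc a, b))) E * ennreal q
      + emeasure (measure_pmf (urn_walk \<alpha> N (a, Suc b))) E * ennreal (1 - q)"
    using q by (simp add: urn_step_def bind_map_pmf q_def[symmetric])
  with q show ?thesis
    by (simp add: measure_pmf.emeasure_eq_measure ennreal_mult''[symmetric] ennreal_plus[symmetric]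
        del: ennreal_plus)
qed

lemma urn_walk_hit_le_fair_bingo:
  assumes "0 < \<alpha>"
  shows "measure_pmf.prob (urn_walk \<alpha> N (a, b)) {xs. (n, n) \<in> set xs} \<le> fair_bingo n a b"
proof (induction N arbitrary: a b)
  case 0
  show ?case
    by (cases "(a, b) = (n, n)") (auto simp: fair_bingo_def fair_hit_def indicator_def)
next
  case (Suc N)
  show ?case
  proof (cases "(a, b) = (n, n)")
    case True
    then show ?thesis by (simp add: fair_bingo_def fair_hit_def)
  next
    case False
    define q where "q = real a powr \<alpha> / (real a powr \<alpha> + real b powr \<alpha>)"
    have q: "0 \<le> q" "q \<le> 1" unfolding q_def by (rule powr_share_bounds)+
    have "measure_pmf.prob (urn_walk \<alpha> (Suc N) (a, b)) {xs. (n, n) \<in> set xs}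
        = q * measure_pmf.prob (urn_walk \<alpha> N (Suc a, b)) {xs. (n, n) \<in> set xs}
          + (1 - q) * measure_pmf.prob (urn_walk \<alpha> N (a, Suc b)) {xs. (n, n) \<in> set xs}"
      unfolding q_def by (rule prob_urn_walk_Suc[OF False])
    also have "\<dots> \<le> q * fair_bingo n (Suc a) b + (1 - q) * fair_bingo n a (Suc b)"
      using Suc.IH q by (intro add_mono mult_left_mono) auto
    also have "\<dots> \<le> fair_bingo n a b"
    proof (rule fair_bingo_supersolution[OF False q])
      show "b < a \<Longrightarrow> 1/2 \<le> q"
        unfolding q_def using assms by (intro powr_share_half(1)) auto
      show "a < b \<Longrightarrow> q \<le> 1/2"
        unfolding q_def using assms by (intro powr_share_half(2)) auto
    qed
    finally show ?thesis .
  qed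
qed

lemma bingo_prob_le_fair_bingo:
  assumes "0 < \<alpha>"
  shows "bingo_prob \<alpha> a b n n \<le> fair_bingo n a b"
  unfolding bingo_prob_def by (rule cSUP_least) (auto intro: urn_walk_hit_le_fair_bingo[OF assms])

lemma fair_bingo_gaussian:
  assumes "real a + real b < 2 * real n"
  shows "fair_bingo n a b \<le> 100 / sqrt (real n - (real a + real b) / 2)
    * exp (- ((real a - real b) / 2)\<^sup>2 / (real n - (real a + real b) / 2))"
proof (cases "a \<le> n \<and> b \<le> n")
  case True
  define u where "u = n - a"
  define v where "v = n - b"
  have "1 \<le> u + v" using assms True by (simp add: u_def v_def)
  have m: "(real u + real v) / 2 = real n - (real a + real b) / 2"
    using True by (simp add: u_def v_def of_nat_diff field_simps)
  have d: "((real v - real u) / 2)\<^sup>2 = ((real a - real b) / 2)\<^sup>2"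
    using True by (simp add: u_def v_def of_nat_diff)
  have "fair_bingo n a b = fair_hit u v"
    using True by (simp add: fair_bingo_def u_def v_def)
  also have "\<dots> \<le> 100 / sqrt ((real u + real v) / 2)
      * exp (- ((real v - real u) / 2)\<^sup>2 / ((real u + real v) / 2))"
  proof (cases "u \<le> v")
    case False
    then have "fair_hit v u \<le> 100 / sqrt ((real v + real u) / 2)
        * exp (- ((real u - real v) / 2)\<^sup>2 / ((real v + real u) / 2))"
      using \<open>1 \<le> u + v\<close> by (intro fair_hit_gaussian) auto
    moreover have "((real u - real v) / 2)\<^sup>2 = ((real v - real u) / 2)\<^sup>2"
      by (simp add: power_divide power2_commute)
    ultimately show ?thesis by (simp add: fair_hit_commute add.commute)
  qed (use \<open>1 \<le> u + v\<close> fair_hit_gaussian in auto)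
  finally show ?thesis unfolding m d .
qed (use assms in \<open>auto simp: fair_bingo_def\<close>)

lemma gaussian_le_inverse_gaussian:
  fixes m L C :: real
  assumes "0 < m" "L \<noteq> 0" "0 \<le> C"
  shows "C / sqrt m * exp (- L\<^sup>2 / m) \<le> C / \<bar>L\<bar> * exp (- L\<^sup>2 / (2 * m))"
proof -
  define s where "s = \<bar>L\<bar> / sqrt m"
  have "s\<^sup>2 = L\<^sup>2 / m" using assms by (simp add: s_def power_divide)
  then have "s * exp (- L\<^sup>2 / (2 * m)) \<le> 1"
    using le_exp_half_square[of s] by (simp add: exp_minus field_simps)
  moreover have "C / sqrt m * exp (- L\<^sup>2 / m)
      = C / \<bar>L\<bar> * exp (- L\<^sup>2 / (2 * m)) * (s * exp (- L\<^sup>2 / (2 * m)))"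
    using assms by (simp add: s_def field_simps flip: exp_add)
  ultimately show ?thesis
    using assms mult_left_mono[of "s * exp (- L\<^sup>2 / (2 * m))" 1 "C / \<bar>L\<bar> * exp (- L\<^sup>2 / (2 * m))"]
    by simp
qed

theorem mainTheorem11:
  shows "\<exists>C C' :: real. \<forall>\<alpha>::real. \<alpha> > 1 \<longrightarrow>
    (\<forall>(n::nat) (A::real) (\<Lambda>::real).
       A < real n \<and> A + \<Lambda> \<in> \<int> \<and> A - \<Lambda> \<in> \<int> \<and> \<bar>\<Lambda>\<bar> \<le> A - 1 \<longrightarrow>
       bingo_prob \<alpha> (nat \<lfloor>A + \<Lambda>\<rfloor>) (nat \<lfloor>A - \<Lambda>\<rfloor>) n n
         \<le> C / sqrt (real n - A) * exp (- (\<Lambda>\<^sup>2) / (real n - A)) \<and>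
       (\<Lambda> \<noteq> 0 \<longrightarrow>
         bingo_prob \<alpha> (nat \<lfloor>A + \<Lambda>\<rfloor>) (nat \<lfloor>A - \<Lambda>\<rfloor>) n n
           \<le> C' / \<bar>\<Lambda>\<bar> * exp (- (\<Lambda>\<^sup>2) / (2 * (real n - A)))))"
  \<comment> \<open>only \<open>0 < \<alpha>\<close> is used: all the comparison needs is that the urn favours the leader\<close>
proof (intro exI[of _ 100] allI impI)
  fix \<alpha> A \<Lambda> :: real and n :: nat
  assume "\<alpha> > 1" and H: "A < real n \<and> A + \<Lambda> \<in> \<int> \<and> A - \<Lambda> \<in> \<int> \<and> \<bar>\<Lambda>\<bar> \<le> A - 1"
  define a where "a = nat \<lfloor>A + \<Lambda>\<rfloor>"
  define b where "b = nat \<lfloor>A - \<Lambda>\<rfloor>"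
  have a: "real a = A + \<Lambda>" and b: "real b = A - \<Lambda>"
    using H by (auto simp: a_def b_def elim!: Ints_cases)
  have "bingo_prob \<alpha> a b n n \<le> fair_bingo n a b"
    using \<open>\<alpha> > 1\<close> by (intro bingo_prob_le_fair_bingo) simp
  also have "\<dots> \<le> 100 / sqrt (real n - A) * exp (- \<Lambda>\<^sup>2 / (real n - A))"
    using fair_bingo_gaussian[of a b n] H by (simp add: a b)
  finally have "bingo_prob \<alpha> a b n n \<le> 100 / sqrt (real n - A) * exp (- \<Lambda>\<^sup>2 / (real n - A))" .
  with gaussian_le_inverse_gaussian[of "real n - A" \<Lambda> 100] H
  show "bingo_prob \<alpha> a b n n \<le> 100 / sqrt (real n - A) * exp (- \<Lambda>\<^sup>2 / (real n - A)) \<and>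
      (\<Lambda> \<noteq> 0 \<longrightarrow> bingo_prob \<alpha> a b n n \<le> 100 / \<bar>\<Lambda>\<bar> * exp (- \<Lambda>\<^sup>2 / (2 * (real n - A))))"
    by auto
qed

end
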